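(* Let $A[0\ldots n-1]$ and $B[0\ldots m-1]$ be sequences over a totally ordered alphabet, and run the procedure $\textsc{LCISLengths}(A,B)$ described in the context. Then for every match $(i,j)$ (i.e. $A[i]=B[j]$) the procedure returns in $\texttt{inc}[(i,j)]$ the length of a longest common strictly increasing subsequence ending at that match (i.e. whose last index pair is $(i,j)$), together with a valid predecessor pointer $\texttt{parent}[(i,j)]$ (the preceding index pair on such a longest subsequence, absent if the subsequence has length $1$).
   Context: A common subsequence of $A$ and $B$ is given by index pairs $(i_1,j_1),\dots,(i_\ell,j_\ell)$ with $i_1<\dots<i_\ell$, $j_1<\dots<j_\ell$ and $A[i_k]=B[j_k]$ for all $k$; it is strictly increasing if $A[i_1]<\dots<A[i_\ell]$. Procedure $\textsc{LCISLengths}(A,B)$: initialise arrays $\texttt{dp}[0..m-1]\gets 0$, $\texttt{dp\_i}[0..m-1]\gets -1$, and empty maps $\texttt{parent}$, $\texttt{inc}$. For $i=0,\dots,n-1$: set $best\gets 0$, $best\_j\gets -1$; for $j=0,\dots,m-1$: (a) if $A[i]=B[j]$ and $best+1>\texttt{dp}[j]$, then set $\texttt{dp}[j]\gets best+1$; if $best\_j\neq -1$ set $\texttt{parent}[(i,j)]\gets(\texttt{dp\_i}[best\_j],best\_j)$; set $\texttt{inc}[(i,j)]\gets\texttt{dp}[j]$ and $\texttt{dp\_i}[j]\gets i$; (b) if $B[j]<A[i]$ and $\texttt{dp}[j]>best$, set $best\gets\texttt{dp}[j]$, $best\_j\gets j$. Finally return $(\texttt{inc},\texttt{parent})$. *)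

theory Defs
  imports Main
begin

definition is_cis :: "'a::linorder list \<Rightarrow> 'a list \<Rightarrow> (nat \<times> nat) list \<Rightarrow> bool" where
  "is_cis A B ps \<longleftrightarrow>
     (\<forall>k < length ps. fst (ps ! k) < length A \<and> snd (ps ! k) < length B
                      \<and> A ! fst (ps ! k) = B ! snd (ps ! k)) \<and>
     (\<forall>k. Suc k < length ps \<longrightarrow>
            fst (ps ! k) < fst (ps ! Suc k) \<and> snd (ps ! k) < snd (ps ! Suc k)
          \<and> A ! fst (ps ! k) < A ! fst (ps ! Suc k))"

definition lcis_end :: "'a::linorder list \<Rightarrow> 'a list \<Rightarrow> nat \<Rightarrow> nat \<Rightarrow> nat" where
  "lcis_end A B i j = Max {length ps | ps. is_cis A B ps \<and> ps \<noteq> [] \<and> last ps = (i, j)}"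

text \<open>State: (dp, dp_i, parent, inc, best, best_j). Arrays are modelled as functions,
  maps as partial functions; the sentinel -1 is kept by using int.\<close>

type_synonym lcis_state =
  "(nat \<Rightarrow> nat) \<times> (nat \<Rightarrow> int) \<times> (nat \<times> nat \<Rightarrow> (int \<times> int) option)
   \<times> (nat \<times> nat \<Rightarrow> nat option) \<times> nat \<times> int"

definition lcis_inner_step :: "'a::linorder list \<Rightarrow> 'a list \<Rightarrow> nat \<Rightarrow> nat \<Rightarrow> lcis_state \<Rightarrow> lcis_state" where
  "lcis_inner_step A B i j st =
    (case st of (dp, dpi, par, inc, best, bj) \<Rightarrow>
      let (dp', dpi', par', inc') =
            (if A ! i = B ! j \<and> best + 1 > dp j
             then (dp(j := best + 1),
                   dpi(j := int i),
                   (if bj \<noteq> -1 then par((i, j) := Some (dpi (nat bj), bj)) else par),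
                   inc((i, j) := Some (best + 1)))
             else (dp, dpi, par, inc));
          (best', bj') = (if B ! j < A ! i \<and> dp' j > best then (dp' j, int j) else (best, bj))
      in (dp', dpi', par', inc', best', bj'))"

definition lcis_outer_step :: "'a::linorder list \<Rightarrow> 'a list \<Rightarrow> nat \<Rightarrow> lcis_state \<Rightarrow> lcis_state" where
  "lcis_outer_step A B i st =
    (case st of (dp, dpi, par, inc, _, _) \<Rightarrow>
       fold (lcis_inner_step A B i) [0..<length B] (dp, dpi, par, inc, 0, -1))"

definition lcis_lengths :: "'a::linorder list \<Rightarrow> 'a list
      \<Rightarrow> (nat \<times> nat \<Rightarrow> nat option) \<times> (nat \<times> nat \<Rightarrow> (int \<times> int) option)" where
  "lcis_lengths A B =
    (case fold (lcis_outer_step A B) [0..<length A]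
            ((\<lambda>_. 0), (\<lambda>_. -1), Map.empty, Map.empty, 0, -1) of
       (dp, dpi, par, inc, _, _) \<Rightarrow> (inc, par))"

end

theory Submission
  imports Defs "HOL-Library.Product_Lexorder"
begin

text \<open>A longest common increasing subsequence ending at a match \<open>(i, j)\<close> is one longer
  than the longest one ending at a match \<open>(a, b)\<close> with \<open>a < i\<close>, \<open>b < j\<close> and \<open>A ! a < A ! i\<close>.
  When the row-major scan reaches \<open>(i, j)\<close>, every such \<open>(a, b)\<close> has been scanned, so \<open>dp b\<close>
  bounds its value, and since \<open>B ! b = A ! a < A ! i\<close>, so does \<open>best\<close>. Conversely \<open>best\<close> is
  either \<open>0\<close> or the value recorded at such a match, namely at \<open>(dpi b, b)\<close> for \<open>b = bj\<close>.
  Hence a recorded value \<open>best + 1\<close> is exact, and the parent pointer \<open>(dpi bj, bj)\<close> is the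
  last-but-one pair of a longest such subsequence.\<close>

definition is_match :: "'a list \<Rightarrow> 'a list \<Rightarrow> nat \<Rightarrow> nat \<Rightarrow> bool" where
  "is_match A B i j \<longleftrightarrow> i < length A \<and> j < length B \<and> A ! i = B ! j"

definition cis_link :: "'a::linorder list \<Rightarrow> nat \<times> nat \<Rightarrow> nat \<times> nat \<Rightarrow> bool" where
  "cis_link A p q \<longleftrightarrow> fst p < fst q \<and> snd p < snd q \<and> A ! fst p < A ! fst q"

lemma is_cis_iff_successively:
  "is_cis A B ps \<longleftrightarrow> (\<forall>(i, j) \<in> set ps. is_match A B i j) \<and> successively (cis_link A) ps"
  by (auto simp: is_cis_def is_match_def cis_link_def successively_conv_nth all_set_conv_all_nth split_beta)

lemma is_cis_snoc:
  "is_cis A B (ps @ [(i, j)]) \<longleftrightarrow>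
     is_cis A B ps \<and> is_match A B i j \<and> (ps \<noteq> [] \<longrightarrow> cis_link A (last ps) (i, j))"
  by (auto simp: is_cis_iff_successively successively_append_iff)

lemma is_cis_singleton [simp]: "is_cis A B [(i, j)] \<longleftrightarrow> is_match A B i j"
  by (simp add: is_cis_iff_successively)

lemma length_le_if_is_cis:
  assumes "is_cis A B ps"
  shows "length ps \<le> length A"
proof -
  have "successively (<) (map fst ps)"
    using assms by (auto simp: is_cis_iff_successively successively_map cis_link_def
        elim: successively_mono)
  then have "distinct (map fst ps)"
    by (simp add: successively_conv_sorted_wrt strict_sorted_iff)
  moreover have "set (map fst ps) \<subseteq> {..<length A}"
    using assms by (auto simp: is_cis_iff_successively is_match_def)
  ultimately show ?thesis
    by (metis card_lessThan card_mono distinct_card finite_lessThan length_map)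
qed

lemma finite_cis_lengths:
  "finite {length ps | ps. is_cis A B ps \<and> ps \<noteq> [] \<and> last ps = (i, j)}"
  by (rule finite_subset[of _ "{..length A}"]) (auto dest: length_le_if_is_cis)

lemma length_le_lcis_end:
  "is_cis A B ps \<Longrightarrow> ps \<noteq> [] \<Longrightarrow> last ps = (i, j) \<Longrightarrow> length ps \<le> lcis_end A B i j"
  unfolding lcis_end_def by (rule Max_ge[OF finite_cis_lengths]) blast

lemma lcis_end_attained:
  assumes "is_match A B i j"
  obtains ps where "is_cis A B ps" "ps \<noteq> []" "last ps = (i, j)" "length ps = lcis_end A B i j"
proof -
  have "is_cis A B [(i, j)]"
    using assms by simp
  then have "{length ps | ps. is_cis A B ps \<and> ps \<noteq> [] \<and> last ps = (i, j)} \<noteq> {}"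
    by fastforce
  from Max_in[OF finite_cis_lengths this] show ?thesis
    using that unfolding lcis_end_def by auto
qed

lemma cis_through_link:
  assumes "is_match A B a b" "is_match A B i j" "cis_link A (a, b) (i, j)"
  obtains ps where "is_cis A B (ps @ [(a, b), (i, j)])" "length ps + 2 = lcis_end A B a b + 1"
proof -
  obtain qs where qs: "is_cis A B qs" "qs \<noteq> []" "last qs = (a, b)" "length qs = lcis_end A B a b"
    using lcis_end_attained[OF assms(1)] .
  then have "qs = butlast qs @ [(a, b)]"
    by (metis append_butlast_last_id)
  moreover have "is_cis A B (qs @ [(i, j)])"
    using qs assms by (simp add: is_cis_snoc)
  ultimately have "is_cis A B (butlast qs @ [(a, b), (i, j)])"
    by (metis append_Cons append_Nil append_assoc)
  moreover have "length (butlast qs) + 2 = lcis_end A B a b + 1"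
    using qs by (cases qs) auto
  ultimately show ?thesis
    using that by blast
qed

lemma lcis_end_link_le:
  assumes "is_match A B a b" "is_match A B i j" "cis_link A (a, b) (i, j)"
  shows "lcis_end A B a b + 1 \<le> lcis_end A B i j"
proof -
  obtain ps where "is_cis A B (ps @ [(a, b), (i, j)])" "length ps + 2 = lcis_end A B a b + 1"
    using cis_through_link[OF assms] .
  then show ?thesis
    using length_le_lcis_end[of A B "ps @ [(a, b), (i, j)]" i j] by simp
qed

lemma lcis_end_le_link:
  assumes "is_match A B i j" "1 < lcis_end A B i j"
  obtains a b where "is_match A B a b" "cis_link A (a, b) (i, j)"
    "lcis_end A B i j \<le> lcis_end A B a b + 1"
proof -
  obtain ps where ps: "is_cis A B ps" "ps \<noteq> []" "last ps = (i, j)" "length ps = lcis_end A B i j"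
    using lcis_end_attained[OF assms(1)] .
  define qs where "qs = butlast ps"
  have ps_eq: "ps = qs @ [(i, j)]"
    using ps unfolding qs_def by (metis append_butlast_last_id)
  then have "qs \<noteq> []"
    using ps assms(2) by auto
  obtain a b where ab: "last qs = (a, b)"
    by fastforce
  have "is_cis A B qs" "cis_link A (a, b) (i, j)"
    using ps(1) \<open>qs \<noteq> []\<close> ab unfolding ps_eq is_cis_snoc by auto
  moreover have "is_match A B a b"
    using \<open>is_cis A B qs\<close> last_in_set[OF \<open>qs \<noteq> []\<close>] ab
    by (fastforce simp: is_cis_iff_successively)
  moreover have "lcis_end A B i j \<le> lcis_end A B a b + 1"
    using length_le_lcis_end[OF \<open>is_cis A B qs\<close> \<open>qs \<noteq> []\<close> ab] ps(4) ps_eq by simp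
  ultimately show ?thesis
    using that by blast
qed

lemma lcis_end_eqI:
  assumes "is_match A B i j"
    and "\<And>a b. is_match A B a b \<Longrightarrow> cis_link A (a, b) (i, j) \<Longrightarrow> lcis_end A B a b \<le> k"
    and "k = 0 \<or> (\<exists>a b. is_match A B a b \<and> cis_link A (a, b) (i, j) \<and> lcis_end A B a b = k)"
  shows "lcis_end A B i j = k + 1"
proof (rule antisym)
  show "lcis_end A B i j \<le> k + 1"
  proof (cases "1 < lcis_end A B i j")
    case True
    then obtain a b where "is_match A B a b" "cis_link A (a, b) (i, j)"
      "lcis_end A B i j \<le> lcis_end A B a b + 1"
      using lcis_end_le_link[OF assms(1)] by blast
    with assms(2) show ?thesis
      by fastforce
  qed simp
  show "k + 1 \<le> lcis_end A B i j"
    using assms(3)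
  proof
    assume "k = 0"
    have "is_cis A B [(i, j)]"
      using assms(1) by simp
    with \<open>k = 0\<close> show ?thesis
      using length_le_lcis_end[of A B "[(i, j)]"] by simp
  qed (use lcis_end_link_le[OF _ assms(1)] in blast)
qed

definition valid_parent ::
  "'a::linorder list \<Rightarrow> 'a list \<Rightarrow> (nat \<times> nat \<Rightarrow> nat option) \<Rightarrow> (nat \<times> nat \<Rightarrow> (int \<times> int) option)
     \<Rightarrow> nat \<Rightarrow> nat \<Rightarrow> nat \<Rightarrow> bool" where
  "valid_parent A B inc par i j l \<longleftrightarrow>
     (par (i, j) = None \<longleftrightarrow> l = 1) \<and>
     (\<forall>p q. par (i, j) = Some (p, q) \<longrightarrow>
        (\<exists>i' j'. p = int i' \<and> q = int j' \<and> inc (i', j') = Some (l - 1)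
           \<and> (\<exists>ps. is_cis A B (ps @ [(i', j'), (i, j)]) \<and> length ps + 2 = l)))"

lemma valid_parent_mono:
  "valid_parent A B inc par i j l \<Longrightarrow> inc \<subseteq>\<^sub>m inc' \<Longrightarrow> par' (i, j) = par (i, j)
     \<Longrightarrow> valid_parent A B inc' par' i j l"
  unfolding valid_parent_def map_le_def by (metis domI)

text \<open>The cells are scanned in row-major order, which is the lexicographic order on index pairs,
  so \<open>(i, j) < pos\<close> says that cell \<open>(i, j)\<close> has been processed before cell \<open>pos\<close>.\<close>

definition table_inv ::
  "'a::linorder list \<Rightarrow> 'a list \<Rightarrow> nat \<times> nat \<Rightarrow> (nat \<Rightarrow> nat) \<Rightarrow> (nat \<Rightarrow> int)
     \<Rightarrow> (nat \<times> nat \<Rightarrow> (int \<times> int) option) \<Rightarrow> (nat \<times> nat \<Rightarrow> nat option) \<Rightarrow> bool" where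
  "table_inv A B pos dp dpi par inc \<longleftrightarrow>
     (\<forall>i j. (i, j) < pos \<longrightarrow> is_match A B i j \<longrightarrow> lcis_end A B i j \<le> dp j) \<and>
     (\<forall>j. 0 < dp j \<longrightarrow> (\<exists>i. dpi j = int i \<and> inc (i, j) = Some (dp j))) \<and>
     (\<forall>i j l. inc (i, j) = Some l \<longrightarrow>
        (i, j) < pos \<and> is_match A B i j \<and> l = lcis_end A B i j \<and> valid_parent A B inc par i j l) \<and>
     (\<forall>i j. \<not> (i, j) < pos \<longrightarrow> par (i, j) = None)"

lemma table_invD:
  assumes "table_inv A B pos dp dpi par inc"
  shows "(i, j) < pos \<Longrightarrow> is_match A B i j \<Longrightarrow> lcis_end A B i j \<le> dp j"
    and "0 < dp j \<Longrightarrow> \<exists>i. dpi j = int i \<and> inc (i, j) = Some (dp j)"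
    and "inc (i, j) = Some l \<Longrightarrow>
           (i, j) < pos \<and> is_match A B i j \<and> l = lcis_end A B i j \<and> valid_parent A B inc par i j l"
    and "\<not> (i, j) < pos \<Longrightarrow> par (i, j) = None"
  using assms unfolding table_inv_def by blast+

lemma less_Pair_Suc_iff: "(a, b) < (i, Suc j) \<longleftrightarrow> (a, b) < (i, j) \<or> (a, b) = (i, j)"
  for a b i j :: nat
  by auto

definition best_inv :: "'a::linorder list \<Rightarrow> 'a list \<Rightarrow> nat \<Rightarrow> nat \<Rightarrow> (nat \<Rightarrow> nat) \<Rightarrow> nat \<Rightarrow> int \<Rightarrow> bool" where
  "best_inv A B i j dp best bj \<longleftrightarrow>
     (\<forall>b<j. B ! b < A ! i \<longrightarrow> dp b \<le> best) \<and>
     (if best = 0 then bj = -1 else \<exists>b<j. bj = int b \<and> B ! b < A ! i \<and> dp b = best)"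

lemma best_attained_at_link:
  assumes tab: "table_inv A B (i, j) dp dpi par inc" and best: "best_inv A B i j dp best bj"
    and "0 < best"
  obtains a b where "bj = int b" "dpi b = int a" "inc (a, b) = Some best" "is_match A B a b"
    "best = lcis_end A B a b" "cis_link A (a, b) (i, j)"
proof -
  obtain b where b: "b < j" "bj = int b" "B ! b < A ! i" "dp b = best"
    using best \<open>0 < best\<close> by (auto simp: best_inv_def)
  then obtain a where a: "dpi b = int a" "inc (a, b) = Some best"
    using table_invD(2)[OF tab, of b] \<open>0 < best\<close> by auto
  then have "(a, b) < (i, j)" "is_match A B a b" "best = lcis_end A B a b"
    using table_invD(3)[OF tab] by blast+
  moreover have "a < i"
    using \<open>(a, b) < (i, j)\<close> \<open>is_match A B a b\<close> b(3) by (cases "a = i") (auto simp: is_match_def)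
  ultimately show ?thesis
    using that a b by (auto simp: cis_link_def is_match_def)
qed

lemma lcis_end_eq_Suc_best:
  assumes tab: "table_inv A B (i, j) dp dpi par inc" and best: "best_inv A B i j dp best bj"
    and "is_match A B i j"
  shows "lcis_end A B i j = best + 1"
proof (rule lcis_end_eqI[OF \<open>is_match A B i j\<close>])
  fix a b
  assume "is_match A B a b" "cis_link A (a, b) (i, j)"
  then have "(a, b) < (i, j)" and "b < j" "B ! b < A ! i"
    by (auto simp: cis_link_def is_match_def)
  from \<open>(a, b) < (i, j)\<close> have "lcis_end A B a b \<le> dp b"
    using table_invD(1)[OF tab] \<open>is_match A B a b\<close> by blast
  also have "dp b \<le> best"
    using best \<open>b < j\<close> \<open>B ! b < A ! i\<close> by (simp add: best_inv_def)
  finally show "lcis_end A B a b \<le> best" .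
next
  show "best = 0 \<or> (\<exists>a b. is_match A B a b \<and> cis_link A (a, b) (i, j) \<and> lcis_end A B a b = best)"
    using best_attained_at_link[OF tab best] by (metis neq0_conv)
qed

lemma valid_parent_recorded:
  assumes tab: "table_inv A B (i, j) dp dpi par inc" and best: "best_inv A B i j dp best bj"
    and "is_match A B i j"
  shows "valid_parent A B (inc((i, j) := Some (best + 1)))
           (if bj \<noteq> -1 then par((i, j) := Some (dpi (nat bj), bj)) else par) i j (best + 1)"
proof (cases "best = 0")
  case True
  then have "bj = -1"
    using best by (simp add: best_inv_def)
  moreover have "par (i, j) = None"
    using tab by (simp add: table_inv_def)
  ultimately show ?thesis
    using True by (simp add: valid_parent_def)
next
  case False
  then obtain a b where ab: "bj = int b" "dpi b = int a" "inc (a, b) = Some best"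
    "is_match A B a b" "best = lcis_end A B a b" "cis_link A (a, b) (i, j)"
    using best_attained_at_link[OF tab best] by blast
  moreover obtain ps where "is_cis A B (ps @ [(a, b), (i, j)])" "length ps + 2 = best + 1"
    using cis_through_link[OF ab(4) \<open>is_match A B i j\<close> ab(6)] ab(5) by metis
  moreover have "(a, b) \<noteq> (i, j)"
    using ab(6) by (auto simp: cis_link_def)
  ultimately show ?thesis
    using False by (auto simp: valid_parent_def)
qed

lemma table_inv_record:
  assumes tab: "table_inv A B (i, j) dp dpi par inc" and best: "best_inv A B i j dp best bj"
    and "is_match A B i j" and "dp j < best + 1"
  shows "table_inv A B (i, Suc j) (dp(j := best + 1)) (dpi(j := int i))
           (if bj \<noteq> -1 then par((i, j) := Some (dpi (nat bj), bj)) else par)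
           (inc((i, j) := Some (best + 1)))"
  (is "table_inv A B _ ?dp ?dpi ?par ?inc")
proof -
  have inc_le: "inc \<subseteq>\<^sub>m ?inc"
    using table_invD(3)[OF tab, of i j] by (auto simp: map_le_def)
  have par_other: "?par (a, b) = par (a, b)" if "(a, b) \<noteq> (i, j)" for a b
    using that by auto
  have lcis_end_ij: "lcis_end A B i j = best + 1"
    using lcis_end_eq_Suc_best[OF tab best \<open>is_match A B i j\<close>] .
  have "lcis_end A B a b \<le> ?dp b" if "(a, b) < (i, Suc j)" "is_match A B a b" for a b
  proof -
    consider "(a, b) = (i, j)" | "(a, b) < (i, j)"
      using \<open>(a, b) < (i, Suc j)\<close> unfolding less_Pair_Suc_iff by blast
    then show ?thesis
    proof cases
      case 2
      then have "lcis_end A B a b \<le> dp b"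
        using table_invD(1)[OF tab] \<open>is_match A B a b\<close> by blast
      also have "dp b \<le> ?dp b"
        using \<open>dp j < best + 1\<close> by simp
      finally show ?thesis .
    qed (use lcis_end_ij in simp)
  qed
  moreover have "\<exists>a. ?dpi b = int a \<and> ?inc (a, b) = Some (?dp b)" if "0 < ?dp b" for b
    using that table_invD(2)[OF tab, of b] inc_le by (cases "b = j") (auto simp: map_le_def)
  moreover have "(a, b) < (i, Suc j) \<and> is_match A B a b \<and> l = lcis_end A B a b
      \<and> valid_parent A B ?inc ?par a b l" if "?inc (a, b) = Some l" for a b l
  proof (cases "(a, b) = (i, j)")
    case True
    then show ?thesis
      using that \<open>is_match A B i j\<close> lcis_end_ij
        valid_parent_recorded[OF tab best \<open>is_match A B i j\<close>]
      unfolding less_Pair_Suc_iff by auto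
  next
    case False
    then have "inc (a, b) = Some l"
      using that by auto
    then show ?thesis
      using table_invD(3)[OF tab]
        valid_parent_mono[of A B inc par a b l ?inc ?par, OF _ inc_le par_other[OF False]]
      unfolding less_Pair_Suc_iff by blast
  qed
  moreover have "?par (a, b) = None" if "\<not> (a, b) < (i, Suc j)" for a b
    using that table_invD(4)[OF tab] unfolding less_Pair_Suc_iff by auto
  ultimately show ?thesis
    unfolding table_inv_def by blast
qed

lemma best_inv_record:
  assumes "best_inv A B i j dp best bj" and "A ! i = B ! j"
  shows "best_inv A B i (Suc j) (dp(j := v)) best bj"
  using assms by (auto simp: best_inv_def less_Suc_eq)

lemma table_inv_skip:
  assumes tab: "table_inv A B (i, j) dp dpi par inc" and best: "best_inv A B i j dp best bj"
    and "\<not> (A ! i = B ! j \<and> dp j < best + 1)"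
  shows "table_inv A B (i, Suc j) dp dpi par inc"
proof -
  have "lcis_end A B i j \<le> dp j" if "is_match A B i j"
    using lcis_end_eq_Suc_best[OF tab best that] that assms(3) by (simp add: is_match_def)
  moreover have "inc (i, j) = None"
    using table_invD(3)[OF tab, of i j] by (cases "inc (i, j)") auto
  moreover have "par (i, j) = None"
    using table_invD(4)[OF tab, of i j] by simp
  ultimately show ?thesis
    using tab unfolding table_inv_def less_Pair_Suc_iff by auto
qed

lemma best_inv_skip:
  assumes "best_inv A B i j dp best bj"
  shows "best_inv A B i (Suc j) dp
           (if B ! j < A ! i \<and> best < dp j then dp j else best)
           (if B ! j < A ! i \<and> best < dp j then int j else bj)"
  using assms by (auto simp: best_inv_def less_Suc_eq)

definition inner_inv :: "'a::linorder list \<Rightarrow> 'a list \<Rightarrow> nat \<Rightarrow> nat \<Rightarrow> lcis_state \<Rightarrow> bool" where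
  "inner_inv A B i j st \<longleftrightarrow> (case st of (dp, dpi, par, inc, best, bj) \<Rightarrow>
     table_inv A B (i, j) dp dpi par inc \<and> best_inv A B i j dp best bj)"

lemma inner_inv_step:
  assumes "inner_inv A B i j st" and "i < length A" "j < length B"
  shows "inner_inv A B i (Suc j) (lcis_inner_step A B i j st)"
proof -
  obtain dp dpi par inc best bj where st: "st = (dp, dpi, par, inc, best, bj)"
    by (cases st)
  have tab: "table_inv A B (i, j) dp dpi par inc" and best: "best_inv A B i j dp best bj"
    using assms(1) by (simp_all add: st inner_inv_def)
  show ?thesis
  proof (cases "A ! i = B ! j \<and> dp j < best + 1")
    case True
    then have "is_match A B i j"
      using assms(2,3) by (simp add: is_match_def)
    with True show ?thesis
      using table_inv_record[OF tab best] best_inv_record[OF best]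
      by (simp add: st inner_inv_def lcis_inner_step_def)
  next
    case False
    then show ?thesis
      using table_inv_skip[OF tab best] best_inv_skip[OF best]
      by (auto simp: st inner_inv_def lcis_inner_step_def)
  qed
qed

lemma inner_inv_fold:
  assumes "i < length A" and "table_inv A B (i, 0) dp dpi par inc"
  shows "k \<le> length B \<Longrightarrow>
           inner_inv A B i k (fold (lcis_inner_step A B i) [0..<k] (dp, dpi, par, inc, 0, -1))"
proof (induction k)
  case 0
  then show ?case
    using assms(2) by (simp add: inner_inv_def best_inv_def)
next
  case (Suc k)
  then show ?case
    using inner_inv_step[OF _ assms(1)] by simp
qed

lemma table_inv_next_row:
  assumes "table_inv A B (i, length B) dp dpi par inc"
  shows "table_inv A B (Suc i, 0) dp dpi par inc"
proof -
  have "(a, b) < (Suc i, 0) \<longleftrightarrow> (a, b) < (i, length B) \<or> (a = i \<and> length B \<le> b)" for a b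
    by auto
  moreover have "\<not> is_match A B a b" if "length B \<le> b" for a b
    using that by (simp add: is_match_def)
  ultimately show ?thesis
    using assms unfolding table_inv_def by blast
qed

definition row_inv :: "'a::linorder list \<Rightarrow> 'a list \<Rightarrow> nat \<Rightarrow> lcis_state \<Rightarrow> bool" where
  "row_inv A B i st \<longleftrightarrow> (case st of (dp, dpi, par, inc, _, _) \<Rightarrow> table_inv A B (i, 0) dp dpi par inc)"

lemma row_inv_outer_step:
  assumes "row_inv A B i st" and "i < length A"
  shows "row_inv A B (Suc i) (lcis_outer_step A B i st)"
proof -
  obtain dp dpi par inc best bj where st: "st = (dp, dpi, par, inc, best, bj)"
    by (cases st)
  have "inner_inv A B i (length B) (lcis_outer_step A B i st)"
    using inner_inv_fold[OF assms(2), of B dp dpi par inc "length B"] assms(1)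
    by (simp add: st row_inv_def lcis_outer_step_def)
  then show ?thesis
    by (auto simp: inner_inv_def row_inv_def split: prod.splits intro: table_inv_next_row)
qed

lemma row_inv_fold:
  "k \<le> length A \<Longrightarrow>
     row_inv A B k (fold (lcis_outer_step A B) [0..<k] ((\<lambda>_. 0), (\<lambda>_. -1), Map.empty, Map.empty, 0, -1))"
proof (induction k)
  case 0
  then show ?case
    by (simp add: row_inv_def table_inv_def)
next
  case (Suc k)
  then show ?case
    using row_inv_outer_step[of A B k] by simp
qed

theorem mainTheorem1:
  fixes A B :: "'a::linorder list"
    and inc :: "nat \<times> nat \<Rightarrow> nat option"
    and parent :: "nat \<times> nat \<Rightarrow> (int \<times> int) option"
  assumes "lcis_lengths A B = (inc, parent)"
    and "inc (i, j) = Some l"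
  shows "i < length A \<and> j < length B \<and> A ! i = B ! j
       \<and> l = lcis_end A B i j
       \<and> (parent (i, j) = None \<longleftrightarrow> l = 1)
       \<and> (\<forall>p q. parent (i, j) = Some (p, q) \<longrightarrow>
            (\<exists>i' j'. p = int i' \<and> q = int j' \<and> inc (i', j') = Some (l - 1)
               \<and> (\<exists>ps. is_cis A B (ps @ [(i', j'), (i, j)]) \<and> length ps + 2 = l)))"
proof -
  obtain dp dpi best bj where run:
    "fold (lcis_outer_step A B) [0..<length A] ((\<lambda>_. 0), (\<lambda>_. -1), Map.empty, Map.empty, 0, -1)
       = (dp, dpi, parent, inc, best, bj)"
    using assms(1) unfolding lcis_lengths_def by (auto split: prod.splits)
  have "table_inv A B (length A, 0) dp dpi parent inc"
    using row_inv_fold[of "length A" A B] by (simp add: run row_inv_def)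
  then have "is_match A B i j \<and> l = lcis_end A B i j \<and> valid_parent A B inc parent i j l"
    using assms(2) unfolding table_inv_def by blast
  then show ?thesis
    unfolding is_match_def valid_parent_def by blast
qed

end
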